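(* (Fusion Theorem) For positive integers $\lambda,t,m,s,v$ with $2\le t\le ms$, $$OCAN_{\lambda}(t,m,s,v)\le OCAN_{\lambda}(t,m,s,v+1)-2.$$
   Context: For positive integers $m,s$, the RT poset $[m\times s]$ is the set $\{1,\ldots,ms\}$ partitioned into $m$ blocks $B_i=\{is+1,\ldots,(i+1)s\}$ ($i=0,\ldots,m-1$); each block is a chain under the usual order of the integers, and elements of different blocks are incomparable. An anti-ideal is the complement of an ideal (a down-closed set). Given an $N\times n$ array over an alphabet $V$ of size $v$, a set of $t$ columns is $\lambda$-covered if in the $N\times t$ subarray formed by those columns every $t$-tuple over $V$ appears as a row at least $\lambda$ times. For positive integers with $2\le t\le ms$, an ordered covering array $OCA_{\lambda}(N;t,m,s,v)$ is an $N\times ms$ array over an alphabet of size $v$ with columns labeled by the elements of $[m\times s]$ such that for every anti-ideal $J$ of size $t$ the set of columns labeled by $J$ is $\lambda$-covered; $OCAN_{\lambda}(t,m,s,v)$ is the smallest $N$ for which an $OCA_{\lambda}(N;t,m,s,v)$ exists. *)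

theory Defs
  imports Main
begin

text \<open>The RT poset [m x s]: ground set {1..m*s}; element x lies in block (x-1) div s;
  x is below y iff they lie in the same block and x \<le> y as integers.\<close>

definition rt_le :: "nat \<Rightarrow> nat \<Rightarrow> nat \<Rightarrow> bool" where
  "rt_le s x y \<longleftrightarrow> (x - 1) div s = (y - 1) div s \<and> x \<le> y"

definition rt_ideal :: "nat \<Rightarrow> nat \<Rightarrow> nat set \<Rightarrow> bool" where
  "rt_ideal m s I \<longleftrightarrow> I \<subseteq> {1..m*s} \<and>
     (\<forall>x\<in>I. \<forall>y\<in>{1..m*s}. rt_le s y x \<longrightarrow> y \<in> I)"

definition rt_anti_ideal :: "nat \<Rightarrow> nat \<Rightarrow> nat set \<Rightarrow> bool" where
  "rt_anti_ideal m s J \<longleftrightarrow> J \<subseteq> {1..m*s} \<and> rt_ideal m s ({1..m*s} - J)"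

text \<open>An N x n array over the alphabet V = {0..<v} is modelled as A :: nat => nat => nat,
  A r c being the entry in row r < N and column c.\<close>
definition lambda_covered :: "nat \<Rightarrow> nat \<Rightarrow> nat \<Rightarrow> (nat \<Rightarrow> nat \<Rightarrow> nat) \<Rightarrow> nat set \<Rightarrow> bool" where
  "lambda_covered lam N v A J \<longleftrightarrow>
     (\<forall>f. (\<forall>c\<in>J. f c < v) \<longrightarrow> card {r. r < N \<and> (\<forall>c\<in>J. A r c = f c)} \<ge> lam)"

definition is_OCA :: "nat \<Rightarrow> nat \<Rightarrow> nat \<Rightarrow> nat \<Rightarrow> nat \<Rightarrow> nat \<Rightarrow> (nat \<Rightarrow> nat \<Rightarrow> nat) \<Rightarrow> bool" where
  "is_OCA lam N t m s v A \<longleftrightarrow>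
     (\<forall>r<N. \<forall>c\<in>{1..m*s}. A r c < v) \<and>
     (\<forall>J. rt_anti_ideal m s J \<and> card J = t \<longrightarrow> lambda_covered lam N v A J)"

definition OCAN :: "nat \<Rightarrow> nat \<Rightarrow> nat \<Rightarrow> nat \<Rightarrow> nat \<Rightarrow> nat" where
  "OCAN lam t m s v = (LEAST N. \<exists>A. is_OCA lam N t m s v A)"

end

theory Submission
  imports Defs "HOL-Library.FuncSet"
begin

text \<open>Take an OCA over v + 1 symbols with N rows, and let a and b be its last two rows.
  In every column c merge the symbol a c into b c and renumber the remaining v symbols;
  then delete the two rows.  A t-tuple f over v symbols lifts to a tuple f' avoiding a on
  every column, and each of the at least lambda rows covering f' fuses to f.  Row a never
  covers f'.  If row b does, change f' in one column c0 to a c0: the at least lambda rows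
  covering this second tuple are new, are neither a nor b (as t \<ge> 2), and also fuse to f.
  So the N - 2 remaining rows still cover f at least lambda times.\<close>

definition collapse :: "nat \<Rightarrow> nat \<Rightarrow> nat" where
  "collapse a x = (if x < a then x else x - 1)"

definition uncollapse :: "nat \<Rightarrow> nat \<Rightarrow> nat" where
  "uncollapse a y = (if y < a then y else Suc y)"

definition fuse :: "nat \<Rightarrow> nat \<Rightarrow> nat \<Rightarrow> nat" where
  "fuse a b x = collapse a (if x = a then b else x)"

lemma collapse_less: "x \<le> v \<Longrightarrow> a \<le> v \<Longrightarrow> 0 < v \<Longrightarrow> collapse a x < v"
  by (auto simp: collapse_def)

lemma uncollapse_neq: "uncollapse a y \<noteq> a"
  by (simp add: uncollapse_def)

lemma uncollapse_le: "y < v \<Longrightarrow> uncollapse a y \<le> v"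
  by (simp add: uncollapse_def)

lemma collapse_uncollapse: "collapse a (uncollapse a y) = y"
  by (simp add: collapse_def uncollapse_def)

lemma fuse_less: "x \<le> v \<Longrightarrow> a \<le> v \<Longrightarrow> b \<le> v \<Longrightarrow> 0 < v \<Longrightarrow> fuse a b x < v"
  by (simp add: fuse_def collapse_less)

lemma fuse_uncollapse: "fuse a b (uncollapse a y) = y"
  by (simp add: fuse_def uncollapse_neq collapse_uncollapse)

lemma fuse_merged: "fuse a (uncollapse a y) a = y"
  by (simp add: fuse_def collapse_uncollapse)

definition matching_rows :: "nat \<Rightarrow> (nat \<Rightarrow> nat \<Rightarrow> nat) \<Rightarrow> nat set \<Rightarrow> (nat \<Rightarrow> nat) \<Rightarrow> nat set" where
  "matching_rows N A J f = {r. r < N \<and> (\<forall>c\<in>J. A r c = f c)}"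

lemma finite_matching_rows [simp]: "finite (matching_rows N A J f)"
  by (simp add: matching_rows_def)

lemma lambda_covered_iff_matching_rows:
  "lambda_covered lam N v A J \<longleftrightarrow>
     (\<forall>f. (\<forall>c\<in>J. f c < v) \<longrightarrow> lam \<le> card (matching_rows N A J f))"
  by (simp add: lambda_covered_def matching_rows_def)

definition fused_array :: "nat \<Rightarrow> (nat \<Rightarrow> nat \<Rightarrow> nat) \<Rightarrow> nat \<Rightarrow> nat \<Rightarrow> nat" where
  "fused_array N A r c = fuse (A (N - 1) c) (A (N - 2) c) (A r c)"

definition lifted_tuple :: "nat \<Rightarrow> (nat \<Rightarrow> nat \<Rightarrow> nat) \<Rightarrow> (nat \<Rightarrow> nat) \<Rightarrow> nat \<Rightarrow> nat" where
  "lifted_tuple N A f c = uncollapse (A (N - 1) c) (f c)"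

lemma matching_rows_disjoint:
  "c \<in> J \<Longrightarrow> h c \<noteq> h' c \<Longrightarrow> matching_rows N A J h \<inter> matching_rows N A J h' = {}"
  by (auto simp: matching_rows_def)

lemma last_row_notin_matching_rows:
  assumes "c \<in> J" "h c = lifted_tuple N A f c"
  shows "N - 1 \<notin> matching_rows N A J h"
proof
  assume "N - 1 \<in> matching_rows N A J h"
  then have "A (N - 1) c = uncollapse (A (N - 1) c) (f c)"
    using assms by (simp add: matching_rows_def lifted_tuple_def)
  then show False
    using uncollapse_neq by metis
qed

lemma below_last_two_rows: "(r::nat) < N \<Longrightarrow> r \<notin> {N - 1, N - 2} \<Longrightarrow> r < N - 2"
  by auto

lemma matching_rows_lifted_tuple_fuse:
  "matching_rows N A J (lifted_tuple N A f) - {N - 1, N - 2}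
     \<subseteq> matching_rows (N - 2) (fused_array N A) J f"
  by (auto simp: matching_rows_def fused_array_def lifted_tuple_def fuse_uncollapse
      dest: below_last_two_rows)

lemma matching_rows_merged_tuple_fuse:
  assumes "N - 2 \<in> matching_rows N A J (lifted_tuple N A f)"
  shows "matching_rows N A J ((lifted_tuple N A f)(c0 := A (N - 1) c0)) - {N - 1, N - 2}
           \<subseteq> matching_rows (N - 2) (fused_array N A) J f"
proof
  fix r assume r: "r \<in> matching_rows N A J ((lifted_tuple N A f)(c0 := A (N - 1) c0)) - {N - 1, N - 2}"
  have "fused_array N A r c = f c" if "c \<in> J" for c
  proof (cases "c = c0")
    case True
    have "A (N - 2) c = lifted_tuple N A f c"
      using assms \<open>c \<in> J\<close> by (simp add: matching_rows_def)
    moreover have "A r c = A (N - 1) c"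
      using r \<open>c \<in> J\<close> True by (simp add: matching_rows_def)
    ultimately show ?thesis
      by (simp add: fused_array_def lifted_tuple_def fuse_merged)
  next
    case False
    then have "A r c = lifted_tuple N A f c"
      using r \<open>c \<in> J\<close> by (simp add: matching_rows_def)
    then show ?thesis
      by (simp add: fused_array_def lifted_tuple_def fuse_uncollapse)
  qed
  moreover have "r < N - 2"
    using r by (intro below_last_two_rows) (auto simp: matching_rows_def)
  ultimately show "r \<in> matching_rows (N - 2) (fused_array N A) J f"
    by (simp add: matching_rows_def)
qed

lemma lambda_covered_fused_array:
  assumes cov: "lambda_covered lam N (v + 1) A J" and "0 < lam"
    and c0: "c0 \<in> J" and c1: "c1 \<in> J" "c1 \<noteq> c0"
    and last_row_bound: "\<forall>c\<in>J. A (N - 1) c \<le> v"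
  shows "lambda_covered lam (N - 2) v (fused_array N A) J"
  unfolding lambda_covered_iff_matching_rows
proof (intro allI impI)
  fix f assume "\<forall>c\<in>J. f c < v"
  then have lifted_bound: "\<forall>c\<in>J. lifted_tuple N A f c < v + 1"
    by (simp add: lifted_tuple_def uncollapse_le less_Suc_eq_le)
  define S where "S = matching_rows N A J (lifted_tuple N A f)"
  let ?T = "matching_rows (N - 2) (fused_array N A) J f"
  have card_S: "lam \<le> card S"
    using cov lifted_bound by (simp add: lambda_covered_iff_matching_rows S_def)
  have "N - 1 \<notin> S"
    using last_row_notin_matching_rows[OF c0] by (simp add: S_def)
  moreover have "S - {N - 1, N - 2} \<subseteq> ?T"
    using matching_rows_lifted_tuple_fuse[of N A J f] by (simp add: S_def)
  ultimately have S_fuses: "S - {N - 2} \<subseteq> ?T"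
    by blast
  show "lam \<le> card ?T"
  proof (cases "N - 2 \<in> S")
    case False
    then have "S \<subseteq> ?T"
      using S_fuses by blast
    then show ?thesis
      using card_S card_mono[OF finite_matching_rows] le_trans by blast
  next
    case True
    define g where "g = (lifted_tuple N A f)(c0 := A (N - 1) c0)"
    define S' where "S' = matching_rows N A J g"
    have "\<forall>c\<in>J. g c < v + 1"
      using lifted_bound last_row_bound c0 by (auto simp: g_def)
    then have card_S': "lam \<le> card S'"
      using cov by (simp add: lambda_covered_iff_matching_rows S'_def)
    have disjoint: "S \<inter> S' = {}"
      unfolding S_def S'_def using c0 uncollapse_neq
      by (intro matching_rows_disjoint) (auto simp: g_def lifted_tuple_def)
    have "N - 1 \<notin> S'"
      unfolding S'_def using c1 by (intro last_row_notin_matching_rows) (auto simp: g_def)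
    moreover have "N - 2 \<notin> S'"
      using True disjoint by blast
    moreover have "S' - {N - 1, N - 2} \<subseteq> ?T"
      using matching_rows_merged_tuple_fuse[of N A J f c0] True by (simp add: S_def S'_def g_def)
    ultimately have "S' \<subseteq> ?T"
      by blast
    with S_fuses have "(S - {N - 2}) \<union> S' \<subseteq> ?T"
      by blast
    then have "card ((S - {N - 2}) \<union> S') \<le> card ?T"
      by (simp add: card_mono)
    moreover have "card ((S - {N - 2}) \<union> S') = (card S - 1) + card S'"
      using disjoint True by (subst card_Un_disjoint) (auto simp: S_def S'_def)
    ultimately show ?thesis
      using card_S card_S' \<open>0 < lam\<close> by linarith
  qed
qed

lemma lambda_covered_rows_ge_2:
  assumes cov: "lambda_covered lam N v A J" and "0 < lam" "2 \<le> v" "c \<in> J"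
  shows "2 \<le> N"
proof -
  have nonempty: "matching_rows N A J (\<lambda>_. i) \<noteq> {}" if "i < v" for i
    using cov that \<open>0 < lam\<close> by (fastforce simp: lambda_covered_iff_matching_rows)
  obtain r0 where "r0 \<in> matching_rows N A J (\<lambda>_. 0)"
    using nonempty[of 0] \<open>2 \<le> v\<close> by auto
  moreover obtain r1 where "r1 \<in> matching_rows N A J (\<lambda>_. 1)"
    using nonempty[of 1] \<open>2 \<le> v\<close> by auto
  ultimately have "r0 < N" "r1 < N" "r0 \<noteq> r1"
    using \<open>c \<in> J\<close> by (auto simp: matching_rows_def)
  then show ?thesis
    by linarith
qed

lemma rt_anti_ideal_top: "t \<le> m * s \<Longrightarrow> rt_anti_ideal m s {m * s - t + 1..m * s}"
  by (auto simp: rt_anti_ideal_def rt_ideal_def rt_le_def)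

lemma is_OCA_rows_ge_2:
  assumes "is_OCA lam N t m s v A" "0 < lam" "2 \<le> v" "0 < t" "t \<le> m * s"
  shows "2 \<le> N"
proof -
  let ?J = "{m * s - t + 1..m * s}"
  have "lambda_covered lam N v A ?J"
    using assms rt_anti_ideal_top by (simp add: is_OCA_def)
  moreover have "m * s \<in> ?J"
    using assms by auto
  ultimately show ?thesis
    using lambda_covered_rows_ge_2 assms by blast
qed

lemma is_OCA_fused_array:
  assumes OCA: "is_OCA lam N t m s (v + 1) A"
    and "0 < lam" "0 < v" "2 \<le> t" "2 \<le> N"
  shows "is_OCA lam (N - 2) t m s v (fused_array N A)"
  unfolding is_OCA_def
proof (intro conjI allI impI ballI)
  have entry_bound: "A r c \<le> v" if "r < N" "c \<in> {1..m * s}" for r c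
    using OCA that by (simp add: is_OCA_def less_Suc_eq_le)
  fix r c assume "r < N - 2" "c \<in> {1..m * s}"
  then show "fused_array N A r c < v"
    using \<open>2 \<le> N\<close> \<open>0 < v\<close> by (simp add: fused_array_def fuse_less entry_bound)
next
  fix J assume J: "rt_anti_ideal m s J \<and> card J = t"
  then have cov: "lambda_covered lam N (v + 1) A J"
    using OCA by (simp add: is_OCA_def)
  have "J \<subseteq> {1..m * s}"
    using J by (simp add: rt_anti_ideal_def)
  then have "\<forall>c\<in>J. A (N - 1) c \<le> v"
    using OCA \<open>2 \<le> N\<close> by (fastforce simp: is_OCA_def less_Suc_eq_le)
  moreover have "2 \<le> card J"
    using J \<open>2 \<le> t\<close> by simp
  then obtain c0 c1 where "c0 \<in> J" "c1 \<in> J" "c1 \<noteq> c0"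
    by (auto simp: numeral_2_eq_2 card_le_Suc_iff)
  ultimately show "lambda_covered lam (N - 2) v (fused_array N A) J"
    using lambda_covered_fused_array[OF cov \<open>0 < lam\<close>] by blast
qed

lemma ex_exhaustive_array:
  assumes "finite C" "0 < v"
  shows "\<exists>K A. (\<forall>r<K. \<forall>c\<in>C. A r c < v) \<and> (\<forall>J\<subseteq>C. lambda_covered 1 K v A J)"
proof -
  let ?F = "\<Pi>\<^sub>E c\<in>C. {..<v}"
  have "finite ?F"
    using assms by (simp add: finite_PiE)
  then obtain h where h: "bij_betw h {0..<card ?F} ?F"
    using ex_bij_betw_nat_finite by blast
  have "\<forall>r<card ?F. \<forall>c\<in>C. h r c < v"
    using h by (auto simp: bij_betw_def)
  moreover have "lambda_covered 1 (card ?F) v h J" if "J \<subseteq> C" for J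
    unfolding lambda_covered_iff_matching_rows
  proof (intro allI impI)
    fix f assume f: "\<forall>c\<in>J. f c < v"
    have "(\<lambda>c\<in>C. if c \<in> J then f c else 0) \<in> h ` {0..<card ?F}"
      using f \<open>0 < v\<close> bij_betw_imp_surj_on[OF h] by auto
    then obtain r where "r < card ?F" "h r = (\<lambda>c\<in>C. if c \<in> J then f c else 0)"
      by auto
    then have "r \<in> matching_rows (card ?F) h J f"
      using \<open>J \<subseteq> C\<close> by (auto simp: matching_rows_def)
    then show "1 \<le> card (matching_rows (card ?F) h J f)"
      by (auto simp: Suc_le_eq card_gt_0_iff)
  qed
  ultimately show ?thesis
    by blast
qed

lemma lambda_covered_repeat:
  assumes "lambda_covered 1 K v A J"
  shows "lambda_covered lam (lam * K) v (\<lambda>r. A (r mod K)) J"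
  unfolding lambda_covered_iff_matching_rows
proof (intro allI impI)
  fix f assume "\<forall>c\<in>J. f c < v"
  then have "matching_rows K A J f \<noteq> {}"
    using assms by (fastforce simp: lambda_covered_iff_matching_rows)
  then obtain i where i: "i < K" "\<forall>c\<in>J. A i c = f c"
    by (auto simp: matching_rows_def)
  have "q * K + i < lam * K" if "q < lam" for q
  proof -
    have "q * K + i < Suc q * K"
      using i by simp
    also have "\<dots> \<le> lam * K"
      using that by (intro mult_right_mono) auto
    finally show ?thesis .
  qed
  then have "q * K + i \<in> matching_rows (lam * K) (\<lambda>r. A (r mod K)) J f" if "q < lam" for q
    using that i by (simp add: matching_rows_def)
  then have "(\<lambda>q. q * K + i) ` {..<lam} \<subseteq> matching_rows (lam * K) (\<lambda>r. A (r mod K)) J f"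
    by blast
  moreover have "inj_on (\<lambda>q. q * K + i) {..<lam}"
    using \<open>i < K\<close> by (intro inj_onI) simp
  then have "card ((\<lambda>q. q * K + i) ` {..<lam}) = lam"
    by (simp add: card_image)
  ultimately show "lam \<le> card (matching_rows (lam * K) (\<lambda>r. A (r mod K)) J f)"
    by (metis card_mono finite_matching_rows)
qed

lemma ex_OCA:
  assumes "0 < v"
  shows "\<exists>N A. is_OCA lam N t m s v A"
proof -
  obtain K A where entries: "\<forall>r<K. \<forall>c\<in>{1..m * s}. A r c < v"
    and covered: "\<forall>J\<subseteq>{1..m * s}. lambda_covered 1 K v A J"
    using ex_exhaustive_array[of "{1..m * s}" v] assms by auto
  have "is_OCA lam (lam * K) t m s v (\<lambda>r. A (r mod K))"
    unfolding is_OCA_def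
  proof (intro conjI allI impI ballI)
    fix r c assume "r < lam * K" "c \<in> {1..m * s}"
    moreover have "0 < K"
      using \<open>r < lam * K\<close> by (cases K) auto
    ultimately show "A (r mod K) c < v"
      using entries by simp
  next
    fix J assume "rt_anti_ideal m s J \<and> card J = t"
    then show "lambda_covered lam (lam * K) v (\<lambda>r. A (r mod K)) J"
      using covered lambda_covered_repeat by (simp add: rt_anti_ideal_def)
  qed
  then show ?thesis
    by blast
qed

lemma OCAN_attained: "0 < v \<Longrightarrow> \<exists>A. is_OCA lam (OCAN lam t m s v) t m s v A"
  unfolding OCAN_def by (rule LeastI_ex) (rule ex_OCA)

lemma OCAN_le: "is_OCA lam N t m s v A \<Longrightarrow> OCAN lam t m s v \<le> N"
  unfolding OCAN_def by (auto intro: Least_le)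

theorem theorem1:
  fixes lam t m s v :: nat
  assumes "lam > 0" "m > 0" "s > 0" "v > 0" "2 \<le> t" "t \<le> m * s"
  shows "OCAN lam t m s v \<le> OCAN lam t m s (v + 1) - 2"
proof -
  let ?N = "OCAN lam t m s (v + 1)"
  obtain A where A: "is_OCA lam ?N t m s (v + 1) A"
    using OCAN_attained[of "v + 1" lam t m s] by auto
  have "2 \<le> ?N"
    using assms by (intro is_OCA_rows_ge_2[OF A]) auto
  then have "is_OCA lam (?N - 2) t m s v (fused_array ?N A)"
    using assms by (intro is_OCA_fused_array[OF A])
  then show ?thesis
    by (rule OCAN_le)
qed

end
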